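(* Let $x_1,\dots,x_n$ be observations, $\Theta\subset\mathbb{R}^{N_\theta}$, and $g(x,\theta)\in\mathbb{R}^{N_g}$ a moment function; write $g_i=g(x_i,\theta)$ and $\hat g=n^{-1}\sum_i g_i$. The exponentially tilted empirical likelihood (ETEL) estimator $\hat\theta_{\mathrm{ETEL}}$ maximizes the objective function $$\ln\hat L(\theta)=-\ln\Big(n^{-1}\sum_i\exp\big(\hat\lambda'(g_i-\hat g)\big)\Big),$$ where $\hat\lambda=\hat\lambda(\theta)$ is such that $n^{-1}\sum_i\exp(\hat\lambda'g_i)g_i=0$. Moreover, the first-order conditions for $\hat\theta_{\mathrm{ETEL}}$ can be written as $$n^{-1}\sum_i(1-n\hat w_i)\frac{d(\hat\lambda'g_i)}{d\theta'}=0,$$ where the total derivative indicates that $\hat\lambda=\hat\lambda(\theta)$ is allowed to vary with $\theta$, and $\hat w_i=\exp(\hat\lambda'g_i)/\sum_j\exp(\hat\lambda'g_j)$.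
   Context: The ETEL estimator is defined by $\hat\theta=\arg\min_\theta n^{-1}\sum_i\big(-\ln(n\hat w_i(\theta))\big)$, where $(\hat w_i(\theta))_{i=1}^n$ solves $\min_{w_1,\dots,w_n} n^{-1}\sum_i nw_i\ln(nw_i)$ subject to $\sum_i w_i g(x_i,\theta)=0$ and $\sum_i w_i=1$. Equivalently (dual form), $\hat w_i(\theta)=\exp(\hat\lambda(\theta)'g(x_i,\theta))/\sum_j\exp(\hat\lambda(\theta)'g(x_j,\theta))$ with $\hat\lambda(\theta)=\arg\max_{\lambda\in\mathbb{R}^{N_g}} n^{-1}\sum_i\big(-\exp(\lambda'g(x_i,\theta))\big)$. *)

theory Defs
  imports "HOL-Analysis.Analysis"
begin

text \<open>Parameters live in a Euclidean space 'p, moments in a Euclidean space 'g.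
  lam is the (given) multiplier map theta |-> lambda-hat(theta).\<close>

definition gbar :: "nat \<Rightarrow> (nat \<Rightarrow> 'x) \<Rightarrow> ('x \<Rightarrow> 'p \<Rightarrow> 'g::real_vector) \<Rightarrow> 'p \<Rightarrow> 'g" where
  "gbar n x g \<theta> = (1 / real n) *\<^sub>R (\<Sum>i<n. g (x i) \<theta>)"

definition is_lambda_hat :: "nat \<Rightarrow> (nat \<Rightarrow> 'x) \<Rightarrow> ('x \<Rightarrow> 'p \<Rightarrow> 'g::real_inner) \<Rightarrow> 'p \<Rightarrow> 'g \<Rightarrow> bool" where
  "is_lambda_hat n x g \<theta> l \<longleftrightarrow>
     (\<forall>l'. (1 / real n) * (\<Sum>i<n. - exp (l' \<bullet> g (x i) \<theta>))
            \<le> (1 / real n) * (\<Sum>i<n. - exp (l \<bullet> g (x i) \<theta>)))"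

definition etel_w :: "nat \<Rightarrow> (nat \<Rightarrow> 'x) \<Rightarrow> ('x \<Rightarrow> 'p \<Rightarrow> 'g::real_inner) \<Rightarrow> ('p \<Rightarrow> 'g) \<Rightarrow> 'p \<Rightarrow> nat \<Rightarrow> real" where
  "etel_w n x g lam \<theta> i =
     exp (lam \<theta> \<bullet> g (x i) \<theta>) / (\<Sum>j<n. exp (lam \<theta> \<bullet> g (x j) \<theta>))"

text \<open>ETEL criterion n^{-1} sum_i -ln(n w_i(theta)), minimized by the ETEL estimator.\<close>
definition etel_crit :: "nat \<Rightarrow> (nat \<Rightarrow> 'x) \<Rightarrow> ('x \<Rightarrow> 'p \<Rightarrow> 'g::real_inner) \<Rightarrow> ('p \<Rightarrow> 'g) \<Rightarrow> 'p \<Rightarrow> real" where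
  "etel_crit n x g lam \<theta> = (1 / real n) * (\<Sum>i<n. - ln (real n * etel_w n x g lam \<theta> i))"

definition etel_lnL :: "nat \<Rightarrow> (nat \<Rightarrow> 'x) \<Rightarrow> ('x \<Rightarrow> 'p \<Rightarrow> 'g::real_inner) \<Rightarrow> ('p \<Rightarrow> 'g) \<Rightarrow> 'p \<Rightarrow> real" where
  "etel_lnL n x g lam \<theta> =
     - ln ((1 / real n) * (\<Sum>i<n. exp (lam \<theta> \<bullet> (g (x i) \<theta> - gbar n x g \<theta>))))"

end

theory Submission imports Defs begin

text \<open>Write \<open>a\<^sub>i(\<theta>) = \<lambda>(\<theta>)\<bullet>g\<^sub>i(\<theta>)\<close>. The moment condition is the first-order condition of the
  concave dual problem defining \<open>\<lambda>\<close>. Since \<open>n w\<^sub>i = exp a\<^sub>i / mean (exp a)\<close>, both the ETEL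
  criterion and \<open>ln L\<close> equal \<open>\<plusminus>(mean a - ln (mean (exp a)))\<close>, so they have the same
  optimizers; differentiating \<open>mean a - ln (mean (exp a))\<close> with the chain rule gives the
  weights \<open>1 - n w\<^sub>i\<close>, and at an interior maximum this derivative vanishes.\<close>

lemma sum_exp_pos:
  fixes n :: nat
  assumes "n \<ge> 1" shows "0 < (\<Sum>i<n. exp (a i :: real))"
  using assms by (intro sum_pos) (auto simp: lessThan_empty_iff)

lemma is_arg_min_uminus_iff: "is_arg_min (\<lambda>x. - f x) P x \<longleftrightarrow> is_arg_max f P x"
  for f :: "'a \<Rightarrow> 'b::ordered_ab_group_add"
  by (auto simp: is_arg_min_def is_arg_max_def)

lemma weighted_sum_zero_if_minimizes_sum_exp:
  fixes G :: "nat \<Rightarrow> 'g::real_inner"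
  assumes min: "\<forall>l'. (\<Sum>i<n. exp (l \<bullet> G i)) \<le> (\<Sum>i<n. exp (l' \<bullet> G i))"
  shows "(\<Sum>i<n. exp (l \<bullet> G i) *\<^sub>R G i) = 0"
proof -
  let ?S = "\<Sum>i<n. exp (l \<bullet> G i) *\<^sub>R G i"
  have "((\<lambda>l'. \<Sum>i<n. exp (l' \<bullet> G i)) has_derivative (\<lambda>v. v \<bullet> ?S)) (at l)"
    by (auto intro!: derivative_eq_intros simp: inner_sum_right mult.commute)
  from differential_zero_maxmin[OF UNIV_I open_UNIV this] min
  have "(\<lambda>v. v \<bullet> ?S) = (\<lambda>v. 0)" by blast
  then have "?S \<bullet> ?S = 0" by metis
  then show ?thesis by simp
qed

lemma moment_condition_if_is_lambda_hat:
  assumes "n \<ge> 1" and "is_lambda_hat n x g \<theta> l"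
  shows "(\<Sum>i<n. exp (l \<bullet> g (x i) \<theta>) *\<^sub>R g (x i) \<theta>) = 0"
proof (rule weighted_sum_zero_if_minimizes_sum_exp, intro allI)
  fix l'
  show "(\<Sum>i<n. exp (l \<bullet> g (x i) \<theta>)) \<le> (\<Sum>i<n. exp (l' \<bullet> g (x i) \<theta>))"
    using assms(2)[unfolded is_lambda_hat_def, rule_format, of l'] assms(1)
    by (simp add: sum_negf divide_le_cancel)
qed

lemma etel_lnL_eq:
  assumes n: "n \<ge> 1"
  shows "etel_lnL n x g lam \<theta> = (1 / real n) * (\<Sum>i<n. lam \<theta> \<bullet> g (x i) \<theta>)
     - ln ((\<Sum>i<n. exp (lam \<theta> \<bullet> g (x i) \<theta>)) / real n)"
proof -
  let ?a = "\<lambda>i. lam \<theta> \<bullet> g (x i) \<theta>"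
  let ?m = "(1 / real n) * (\<Sum>i<n. ?a i)"
  have "lam \<theta> \<bullet> gbar n x g \<theta> = ?m"
    by (simp add: gbar_def inner_sum_right)
  then have "(\<Sum>i<n. exp (lam \<theta> \<bullet> (g (x i) \<theta> - gbar n x g \<theta>))) = (\<Sum>i<n. exp (?a i)) * exp (- ?m)"
    by (simp add: inner_diff_right exp_diff sum_distrib_right exp_minus divide_inverse)
  with sum_exp_pos[OF n, of ?a] n show ?thesis
    by (simp add: etel_lnL_def ln_mult divide_inverse mult.commute)
qed

lemma etel_crit_eq_neg_etel_lnL:
  assumes n: "n \<ge> 1"
  shows "etel_crit n x g lam \<theta> = - etel_lnL n x g lam \<theta>"
proof -
  let ?a = "\<lambda>i. lam \<theta> \<bullet> g (x i) \<theta>"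
  let ?S = "\<Sum>i<n. exp (?a i)"
  have S: "?S > 0" using sum_exp_pos[OF n] .
  have "ln (real n * etel_w n x g lam \<theta> i) = ln (real n) + ?a i - ln ?S" for i
    using n S by (simp add: etel_w_def ln_mult ln_div)
  then have "etel_crit n x g lam \<theta> = (1 / real n) * (\<Sum>i<n. ln ?S - (ln (real n) + ?a i))"
    by (simp add: etel_crit_def)
  also have "\<dots> = ln ?S - ln (real n) - (1 / real n) * (\<Sum>i<n. ?a i)"
    using n by (simp add: sum_subtractf sum.distrib field_simps)
  finally show ?thesis
    using etel_lnL_eq[OF n, of x g lam \<theta>] n S by (simp add: ln_div)
qed

lemma has_derivative_mean_minus_ln_mean_exp:
  fixes a :: "nat \<Rightarrow> 'p::real_normed_vector \<Rightarrow> real"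
  assumes n: "n \<ge> 1" and a: "\<forall>i<n. (a i has_derivative D i) (at \<theta>0)"
  shows "((\<lambda>\<theta>. (1 / real n) * (\<Sum>i<n. a i \<theta>) - ln ((\<Sum>i<n. exp (a i \<theta>)) / real n))
     has_derivative (\<lambda>v. (1 / real n) *
       (\<Sum>i<n. (1 - real n * (exp (a i \<theta>0) / (\<Sum>j<n. exp (a j \<theta>0)))) * D i v))) (at \<theta>0)"
proof -
  let ?S = "\<Sum>j<n. exp (a j \<theta>0)"
  have S: "?S > 0" using sum_exp_pos[OF n] .
  have "(\<Sum>i<n. (1 - real n * (exp (a i \<theta>0) / ?S)) * D i v)
      = (\<Sum>i<n. D i v) - real n * ((\<Sum>i<n. exp (a i \<theta>0) * D i v) / ?S)" for v
    by (simp add: left_diff_distrib sum_subtractf sum_distrib_left sum_divide_distrib mult.assoc)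
  then have "(\<lambda>v. (1 / real n) * (\<Sum>i<n. (1 - real n * (exp (a i \<theta>0) / ?S)) * D i v))
      = (\<lambda>v. (1 / real n) * (\<Sum>i<n. D i v) - (\<Sum>i<n. exp (a i \<theta>0) * D i v) / ?S)"
    using n by (simp add: right_diff_distrib)
  moreover have "((\<lambda>\<theta>. (1 / real n) * (\<Sum>i<n. a i \<theta>) - ln ((\<Sum>i<n. exp (a i \<theta>)) / real n))
     has_derivative (\<lambda>v. (1 / real n) * (\<Sum>i<n. D i v) - (\<Sum>i<n. exp (a i \<theta>0) * D i v) / ?S)) (at \<theta>0)"
    using a S n by (auto intro!: derivative_eq_intros simp: field_simps mult.commute)
  ultimately show ?thesis by simp
qed

lemma has_derivative_etel_lnL:
  assumes n: "n \<ge> 1"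
    and D: "\<forall>i<n. ((\<lambda>\<theta>. lam \<theta> \<bullet> g (x i) \<theta>) has_derivative D i) (at \<theta>0)"
  shows "(etel_lnL n x g lam has_derivative
     (\<lambda>v. (1 / real n) * (\<Sum>i<n. (1 - real n * etel_w n x g lam \<theta>0 i) * D i v))) (at \<theta>0)"
  using has_derivative_mean_minus_ln_mean_exp[OF n D]
  by (simp add: etel_lnL_eq[OF n, abs_def] etel_w_def)

theorem theorem2:
  fixes n :: nat and x :: "nat \<Rightarrow> 'x"
    and g :: "'x \<Rightarrow> 'p::euclidean_space \<Rightarrow> 'g::euclidean_space"
    and \<Theta> :: "'p set" and lam :: "'p \<Rightarrow> 'g"
  assumes n_pos: "n \<ge> 1"
    and lam_hat: "\<forall>\<theta>\<in>\<Theta>. is_lambda_hat n x g \<theta> (lam \<theta>)"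
  shows
    "(\<forall>\<theta>\<in>\<Theta>. (1 / real n) *\<^sub>R (\<Sum>i<n. exp (lam \<theta> \<bullet> g (x i) \<theta>) *\<^sub>R g (x i) \<theta>) = 0)
     \<and> (\<forall>\<theta>\<in>\<Theta>. etel_crit n x g lam \<theta> = - etel_lnL n x g lam \<theta>)
     \<and> (\<forall>\<theta>0. is_arg_min (etel_crit n x g lam) (\<lambda>\<theta>. \<theta> \<in> \<Theta>) \<theta>0
              \<longleftrightarrow> is_arg_max (etel_lnL n x g lam) (\<lambda>\<theta>. \<theta> \<in> \<Theta>) \<theta>0)
     \<and> (\<forall>\<theta>0 D. (\<forall>i<n. ((\<lambda>\<theta>. lam \<theta> \<bullet> g (x i) \<theta>) has_derivative D i) (at \<theta>0))
          \<longrightarrow> (etel_lnL n x g lam has_derivative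
                (\<lambda>v. (1 / real n) * (\<Sum>i<n. (1 - real n * etel_w n x g lam \<theta>0 i) * D i v))) (at \<theta>0))
     \<and> (\<forall>\<theta>0 D. \<theta>0 \<in> interior \<Theta> \<and> is_arg_max (etel_lnL n x g lam) (\<lambda>\<theta>. \<theta> \<in> \<Theta>) \<theta>0
          \<and> (\<forall>i<n. ((\<lambda>\<theta>. lam \<theta> \<bullet> g (x i) \<theta>) has_derivative D i) (at \<theta>0))
          \<longrightarrow> (\<forall>v. (1 / real n) * (\<Sum>i<n. (1 - real n * etel_w n x g lam \<theta>0 i) * D i v) = 0))"
proof -
  have crit: "etel_crit n x g lam = (\<lambda>\<theta>. - etel_lnL n x g lam \<theta>)"
    using etel_crit_eq_neg_etel_lnL[OF n_pos] by (intro ext)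
  have foc: "(1 / real n) * (\<Sum>i<n. (1 - real n * etel_w n x g lam \<theta>0 i) * D i v) = 0"
    if "\<theta>0 \<in> interior \<Theta>" "is_arg_max (etel_lnL n x g lam) (\<lambda>\<theta>. \<theta> \<in> \<Theta>) \<theta>0"
      "\<forall>i<n. ((\<lambda>\<theta>. lam \<theta> \<bullet> g (x i) \<theta>) has_derivative D i) (at \<theta>0)" for \<theta>0 D v
  proof -
    have "\<forall>y\<in>interior \<Theta>. etel_lnL n x g lam y \<le> etel_lnL n x g lam \<theta>0"
      using that(2) interior_subset by (fastforce simp: is_arg_max_linorder)
    then show ?thesis
      using differential_zero_maxmin[OF that(1) open_interior
          has_derivative_etel_lnL[where D=D and x=x and g=g and lam=lam, OF n_pos that(3)]]
      by (metis (lifting))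
  qed
  have moment: "(1 / real n) *\<^sub>R (\<Sum>i<n. exp (lam \<theta> \<bullet> g (x i) \<theta>) *\<^sub>R g (x i) \<theta>) = 0"
    if "\<theta> \<in> \<Theta>" for \<theta>
    using moment_condition_if_is_lambda_hat[OF n_pos lam_hat[rule_format, OF that]] by simp
  show ?thesis
    using moment has_derivative_etel_lnL[OF n_pos] foc
    unfolding crit is_arg_min_uminus_iff by blast
qed

end
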